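(* Let $\Omega$ be a finite set and let $f_1,\ldots,f_n\in\mathbb{R}^{\Omega}$ be gambles. Let $$\mathcal M=\{p\in\mathbb{R}^{\Omega}: p\cdot f_i\ge 0 \text{ for } i=1,\ldots,n,\ p\cdot 1_\Omega=1\},$$ and assume $\mathcal M$ is a nonempty credal set (a nonempty, closed, convex set of probability mass vectors) and that for each $i$ there is $p\in\mathcal M$ with $p\cdot f_i=0$. For a gamble $h$ write $\underline{E}(h)=\min_{P\in\mathcal M}P\cdot h$. Let $E\in\mathcal M$, let $h$ be a gamble with $E\cdot h=\underline{E}(h)$, and let $I=\{i: E\cdot f_i=0\}$. For $i\in I$ let $f'_i$ be the unique vector such that $f_i-f'_i=c_i1_\Omega$ for some constant $c_i\in\mathbb{R}$ and $f'_i\cdot 1_\Omega=0$. Then there exist $\alpha'_i\ge 0$ for $i\in I$ and $\beta'\in\mathbb{R}$ such that $$h=\sum_{i\in I}\alpha'_i f'_i+\beta' 1_\Omega.$$ Moreover, $$\Big\|\sum_{i\in I}\alpha'_i f'_i\Big\|\le\Big\|\sum_{i\in I}\alpha'_i f'_i+\beta 1_\Omega\Big\|\quad\text{for every }\beta\in\mathbb{R}.$$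
   Context: Gambles are real-valued maps on the finite set $\Omega$, identified with vectors in $\mathbb{R}^{\Omega}$; $f\cdot g=\sum_{x\in\Omega}f(x)g(x)$ is the standard inner product and $\|f\|=\sqrt{f\cdot f}$ the Euclidean norm; $1_\Omega$ is the constant gamble $1$. Linear previsions are identified with probability mass vectors $P$, with $P(f)=P\cdot f$. *)

theory Defs
  imports "HOL-Analysis.Analysis"
begin

definition gdot :: "('w::finite \<Rightarrow> real) \<Rightarrow> ('w \<Rightarrow> real) \<Rightarrow> real" where
  "gdot f g = (\<Sum>x\<in>UNIV. f x * g x)"

definition gnorm :: "('w::finite \<Rightarrow> real) \<Rightarrow> real" where
  "gnorm f = sqrt (gdot f f)"

definition gone :: "'w \<Rightarrow> real" where
  "gone = (\<lambda>_. 1)"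

definition lower_exp :: "('w::finite \<Rightarrow> real) set \<Rightarrow> ('w \<Rightarrow> real) \<Rightarrow> real" where
  "lower_exp M h = (INF P\<in>M. gdot P h)"

definition centered :: "('w::finite \<Rightarrow> real) \<Rightarrow> ('w \<Rightarrow> real)" where
  "centered f = (THE g. (\<exists>c::real. \<forall>x. f x - g x = c) \<and> gdot g gone = 0)"

end

theory Submission
  imports Defs
begin

text \<open>If the minimiser E of h over M could be moved along a direction A that keeps the active
  constraints (A.f_i \<ge> 0 for i \<in> I, A.1 = 0) and strictly decreases h (A.h < 0), then E + tA
  would stay in M for small t > 0 and beat E.  By Farkas' lemma for the finitely generated cone
  spanned by the active f_i and the line through 1, no such A exists exactly when
  h = sum of alpha_i f_i over I plus beta 1, with all alpha_i \<ge> 0.  Replacing each f_i by its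
  centred version only changes beta, and the centred combination is orthogonal to 1, so adding a
  multiple of 1 can only increase its norm.\<close>

lemma gdot_vec_lambda: "gdot p g = vec_lambda p \<bullet> (vec_lambda g :: real^'w::finite)"
  by (simp add: gdot_def inner_vec_def)

lemma gdot_add_scale_left: "gdot (\<lambda>x. p x + t * q x) g = gdot p g + t * gdot q g"
  by (simp add: gdot_def algebra_simps sum.distrib sum_distrib_left)

lemma gdot_sum_left:
  "gdot (\<lambda>x. \<Sum>i\<in>I. a i * g i x) u = (\<Sum>i\<in>I. a i * gdot (g i) u)"
  unfolding gdot_def by (simp add: sum_distrib_left sum_distrib_right sum.swap[of _ UNIV] mult.assoc)

lemma farkas_convex_cone_hull:
  fixes y :: "'a::euclidean_space"
  assumes "finite S" and "y \<notin> convex_cone hull S"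
  obtains a where "\<forall>s\<in>S. 0 \<le> a \<bullet> s" and "a \<bullet> y < 0"
proof -
  let ?K = "convex_cone hull S"
  obtain a b where ay: "a \<bullet> y < b" and aK: "\<forall>x\<in>?K. b < a \<bullet> x"
    using separating_hyperplane_closed_point[OF convex_convex_cone_hull
        closed_convex_cone_hull[OF \<open>finite S\<close>] assms(2)] by blast
  have "b < 0" using aK convex_cone_hull_contains_0 by fastforce
  have "0 \<le> a \<bullet> x" if "x \<in> ?K" for x
  proof (rule ccontr)
    assume "\<not> 0 \<le> a \<bullet> x"
    then have "a \<bullet> x < 0" by simp
    \<comment> \<open>rescaling x within the cone drives a below the level b\<close>
    then have "(b / (a \<bullet> x)) *\<^sub>R x \<in> ?K"
      using \<open>b < 0\<close> that by (intro convex_cone_hull_mul) (simp_all add: divide_nonpos_neg)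
    with aK have "b < a \<bullet> ((b / (a \<bullet> x)) *\<^sub>R x)" by blast
    with \<open>a \<bullet> x < 0\<close> show False by simp
  qed
  then show thesis
    using that[of a] ay \<open>b < 0\<close> hull_subset[of S convex_cone] by fastforce
qed

lemma convex_cone_hull_with_line_subset:
  fixes v :: "'i \<Rightarrow> 'a::real_vector"
  assumes "finite I"
  shows "convex_cone hull (v ` I \<union> {u, - u})
           \<subseteq> {(\<Sum>i\<in>I. c i *\<^sub>R v i) + t *\<^sub>R u | c t. \<forall>i\<in>I. 0 \<le> c i}"
    (is "_ \<subseteq> ?C")
proof (rule hull_minimal)
  have "v j \<in> ?C" if "j \<in> I" for j
  proof -
    have "(\<Sum>i\<in>I. (if i = j then 1 else 0) *\<^sub>R v i) = (\<Sum>i\<in>I. if i = j then v i else 0)"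
      by (rule sum.cong) auto
    then have "v j = (\<Sum>i\<in>I. (if i = j then 1 else 0) *\<^sub>R v i) + 0 *\<^sub>R u"
      using assms that by simp
    then show ?thesis by fastforce
  qed
  moreover have "u = (\<Sum>i\<in>I. 0 *\<^sub>R v i) + 1 *\<^sub>R u" "- u = (\<Sum>i\<in>I. 0 *\<^sub>R v i) + (-1) *\<^sub>R u"
    by simp_all
  ultimately show "v ` I \<union> {u, - u} \<subseteq> ?C" by fastforce
  show "convex_cone ?C"
  proof (unfold convex_cone_iff, intro conjI ballI allI impI)
    show "0 \<in> ?C"
      by (rule CollectI, rule exI[of _ "\<lambda>_. 0"], rule exI[of _ 0]) simp
  next
    fix x y assume "x \<in> ?C" "y \<in> ?C"
    then obtain c t c' t' where "x = (\<Sum>i\<in>I. c i *\<^sub>R v i) + t *\<^sub>R u" "\<forall>i\<in>I. 0 \<le> c i"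
      and "y = (\<Sum>i\<in>I. c' i *\<^sub>R v i) + t' *\<^sub>R u" "\<forall>i\<in>I. 0 \<le> c' i" by blast
    then have "x + y = (\<Sum>i\<in>I. (c i + c' i) *\<^sub>R v i) + (t + t') *\<^sub>R u \<and> (\<forall>i\<in>I. 0 \<le> c i + c' i)"
      by (simp add: scaleR_add_left sum.distrib algebra_simps)
    then show "x + y \<in> ?C" by (blast intro: exI[of _ "\<lambda>i. c i + c' i"])
  next
    fix x and s :: real assume "x \<in> ?C" "0 \<le> s"
    then obtain c t where "x = (\<Sum>i\<in>I. c i *\<^sub>R v i) + t *\<^sub>R u" "\<forall>i\<in>I. 0 \<le> c i" by blast
    with \<open>0 \<le> s\<close> have "s *\<^sub>R x = (\<Sum>i\<in>I. (s * c i) *\<^sub>R v i) + (s * t) *\<^sub>R u \<and> (\<forall>i\<in>I. 0 \<le> s * c i)"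
      by (simp add: scaleR_right.sum scaleR_add_right)
    then show "s *\<^sub>R x \<in> ?C" by (blast intro: exI[of _ "\<lambda>i. s * c i"])
  qed
qed

lemma farkas_cone_with_line:
  fixes v :: "'i \<Rightarrow> 'a::euclidean_space"
  assumes "finite I"
    and "\<nexists>c t. (\<forall>i\<in>I. 0 \<le> c i) \<and> y = (\<Sum>i\<in>I. c i *\<^sub>R v i) + t *\<^sub>R u"
  obtains a where "\<forall>i\<in>I. 0 \<le> a \<bullet> v i" and "a \<bullet> u = 0" and "a \<bullet> y < 0"
proof -
  have "finite (v ` I \<union> {u, - u})"
    using assms(1) by simp
  moreover have "y \<notin> convex_cone hull (v ` I \<union> {u, - u})"
    using convex_cone_hull_with_line_subset[OF assms(1), of v u] assms(2) by (auto simp: subset_iff)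
  ultimately obtain a where "\<forall>s\<in>v ` I \<union> {u, - u}. 0 \<le> a \<bullet> s" "a \<bullet> y < 0"
    by (rule farkas_convex_cone_hull)
  then show thesis
    using that[of a] by simp
qed

lemma gamble_farkas:
  fixes f :: "'i \<Rightarrow> 'w::finite \<Rightarrow> real"
  assumes "finite I"
    and "\<nexists>\<alpha> \<beta>. (\<forall>i\<in>I. 0 \<le> \<alpha> i) \<and> h = (\<lambda>x. (\<Sum>i\<in>I. \<alpha> i * f i x) + \<beta>)"
  obtains A where "\<forall>i\<in>I. 0 \<le> gdot A (f i)" and "gdot A gone = 0" and "gdot A h < 0"
proof -
  have "\<nexists>c t. (\<forall>i\<in>I. 0 \<le> c i) \<and>
          vec_lambda h = (\<Sum>i\<in>I. c i *\<^sub>R vec_lambda (f i)) + t *\<^sub>R (vec_lambda gone :: real^'w)"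
  proof clarify
    fix c t assume c: "\<forall>i\<in>I. 0 \<le> c i"
      and h: "vec_lambda h = (\<Sum>i\<in>I. c i *\<^sub>R vec_lambda (f i)) + t *\<^sub>R (vec_lambda gone :: real^'w)"
    have "h = (\<lambda>x. (\<Sum>i\<in>I. c i * f i x) + t)"
    proof
      fix x show "h x = (\<Sum>i\<in>I. c i * f i x) + t"
        using arg_cong[OF h, of "\<lambda>v. v $ x"] by (simp add: sum_component gone_def)
    qed
    moreover from assms(2) have "\<not> ((\<forall>i\<in>I. 0 \<le> c i) \<and> h = (\<lambda>x. (\<Sum>i\<in>I. c i * f i x) + t))"
      by blast
    ultimately show False using c by blast
  qed
  then obtain a where "\<forall>i\<in>I. 0 \<le> a \<bullet> vec_lambda (f i)" "a \<bullet> vec_lambda gone = 0" "a \<bullet> vec_lambda h < 0"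
    by (rule farkas_cone_with_line[OF assms(1)])
  then show thesis
    using that[of "vec_nth a"] by (simp add: gdot_vec_lambda)
qed

lemma eventually_feasible_direction:
  fixes f :: "'i \<Rightarrow> 'w::finite \<Rightarrow> real"
  assumes "finite J" and "\<forall>i\<in>J. 0 \<le> gdot E (f i)"
    and "\<forall>i\<in>J. gdot E (f i) = 0 \<longrightarrow> 0 \<le> gdot A (f i)"
  shows "\<forall>\<^sub>F t in at_right 0. \<forall>i\<in>J. 0 \<le> gdot (\<lambda>x. E x + t * A x) (f i)"
proof (rule eventually_ball_finite[OF assms(1)], intro ballI)
  fix i assume "i \<in> J"
  show "\<forall>\<^sub>F t in at_right 0. 0 \<le> gdot (\<lambda>x. E x + t * A x) (f i)"
  proof (cases "gdot E (f i) = 0")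
    case True
    with assms(3) \<open>i \<in> J\<close> have "0 \<le> gdot A (f i)" by blast
    have "\<forall>\<^sub>F t in at_right 0. 0 < (t::real)"
      by (rule eventually_at_right_less)
    then show ?thesis
    proof eventually_elim
      case (elim t)
      with True \<open>0 \<le> gdot A (f i)\<close> show ?case by (simp add: gdot_add_scale_left)
    qed
  next
    case False
    with assms(2) \<open>i \<in> J\<close> have "0 < gdot E (f i)" by force
    moreover have "((\<lambda>t. gdot E (f i) + t * gdot A (f i)) \<longlongrightarrow> gdot E (f i)) (at_right 0)"
      by (auto intro!: tendsto_eq_intros)
    ultimately have "\<forall>\<^sub>F t in at_right 0. 0 < gdot E (f i) + t * gdot A (f i)"
      by (rule order_tendstoD(1)[rotated])
    then show ?thesis
      by eventually_elim (simp add: gdot_add_scale_left)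
  qed
qed

lemma gdot_ge_neg_sum_abs:
  assumes "\<forall>x. 0 \<le> P x" and "gdot P gone = 1"
  shows "- (\<Sum>x\<in>UNIV. \<bar>h x\<bar>) \<le> gdot P h"
proof -
  have "P x \<le> 1" for x
    using member_le_sum[of x UNIV P] assms by (simp add: gdot_def gone_def)
  then have "\<bar>P x * h x\<bar> \<le> \<bar>h x\<bar>" for x
    using assms(1) by (simp add: abs_mult mult_left_le_one_le)
  then have "- \<bar>h x\<bar> \<le> P x * h x" for x
    by (meson abs_le_D2 minus_le_iff)
  then show ?thesis
    unfolding gdot_def by (simp add: sum_negf[symmetric] sum_mono)
qed

lemma lower_exp_le:
  assumes "\<forall>P\<in>M. \<forall>x. 0 \<le> P x" and "\<forall>P\<in>M. gdot P gone = 1" and "P \<in> M"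
  shows "lower_exp M h \<le> gdot P h"
  unfolding lower_exp_def
proof (rule cINF_lower[OF _ \<open>P \<in> M\<close>])
  show "bdd_below ((\<lambda>P. gdot P h) ` M)"
    using gdot_ge_neg_sum_abs assms(1,2) by (intro bdd_belowI2) blast
qed

lemma minimizer_in_active_cone:
  fixes f :: "'i \<Rightarrow> 'w::finite \<Rightarrow> real"
  assumes M: "M = {p. (\<forall>i\<in>J. 0 \<le> gdot p (f i)) \<and> gdot p gone = 1}"
    and "finite J" and "E \<in> M" and E_min: "\<forall>P\<in>M. gdot E h \<le> gdot P h"
  shows "\<exists>\<alpha> \<beta>. (\<forall>i\<in>{i\<in>J. gdot E (f i) = 0}. 0 \<le> \<alpha> i) \<and>
           h = (\<lambda>x. (\<Sum>i\<in>{i\<in>J. gdot E (f i) = 0}. \<alpha> i * f i x) + \<beta>)"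
proof (rule ccontr)
  let ?I = "{i\<in>J. gdot E (f i) = 0}"
  assume "\<not> ?thesis"
  then obtain A where A_active: "\<forall>i\<in>?I. 0 \<le> gdot A (f i)" and "gdot A gone = 0" and "gdot A h < 0"
    using gamble_farkas[of ?I h f] \<open>finite J\<close> by auto
  have "\<forall>\<^sub>F t in at_right 0. \<forall>i\<in>J. 0 \<le> gdot (\<lambda>x. E x + t * A x) (f i)"
    using \<open>finite J\<close> \<open>E \<in> M\<close> A_active by (intro eventually_feasible_direction) (auto simp: M)
  moreover have "\<forall>\<^sub>F t in at_right 0. 0 < (t::real)"
    by (rule eventually_at_right_less)
  ultimately obtain t where t: "\<forall>i\<in>J. 0 \<le> gdot (\<lambda>x. E x + t * A x) (f i)" "0 < t"
    using eventually_happens'[OF trivial_limit_at_right_real] eventually_conj by blast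
  have "(\<lambda>x. E x + t * A x) \<in> M"
    using t(1) \<open>E \<in> M\<close> \<open>gdot A gone = 0\<close> by (simp add: M gdot_add_scale_left)
  then have "gdot E h \<le> gdot E h + t * gdot A h"
    using E_min gdot_add_scale_left[of E t A h] by fastforce
  with \<open>0 < t\<close> \<open>gdot A h < 0\<close> show False
    using mult_pos_neg[of t "gdot A h"] by linarith
qed

lemma centered_eq:
  "centered (f::'w::finite \<Rightarrow> real) = (\<lambda>x. f x - gdot f gone / real CARD('w))"
  unfolding centered_def
proof (rule the_equality)
  show "(\<exists>c. \<forall>x. f x - (f x - gdot f gone / real CARD('w)) = c) \<and>
      gdot (\<lambda>x. f x - gdot f gone / real CARD('w)) gone = 0"
    by (simp add: gdot_def gone_def sum_subtractf)
next
  fix g assume "(\<exists>c. \<forall>x. f x - g x = c) \<and> gdot g gone = 0"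
  then obtain c where c: "\<And>x. f x - g x = c" and "gdot g gone = 0" by blast
  then have g: "g = (\<lambda>x. f x - c)"
    by (auto simp: algebra_simps)
  with \<open>gdot g gone = 0\<close> have "gdot f gone - real CARD('w) * c = 0"
    by (simp add: gdot_def gone_def sum_subtractf)
  then show "g = (\<lambda>x. f x - gdot f gone / real CARD('w))"
    by (simp add: g field_simps)
qed

lemma gdot_centered_gone: "gdot (centered f) gone = 0"
  by (simp add: centered_eq gdot_def gone_def sum_subtractf)

lemma nonneg_combination_centered:
  fixes f :: "'i \<Rightarrow> 'w::finite \<Rightarrow> real"
  shows "(\<lambda>x. (\<Sum>i\<in>I. \<alpha> i * f i x) + \<beta>) =
    (\<lambda>x. (\<Sum>i\<in>I. \<alpha> i * centered (f i) x)
         + (\<beta> + (\<Sum>i\<in>I. \<alpha> i * gdot (f i) gone / real CARD('w))) * gone x)"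
  by (simp add: centered_eq gone_def algebra_simps sum_subtractf sum.distrib fun_eq_iff)

lemma gnorm_le_add_orthogonal:
  assumes "gdot g u = 0"
  shows "gnorm g \<le> gnorm (\<lambda>x. g x + \<beta> * u x)"
proof -
  have "gdot (\<lambda>x. g x + \<beta> * u x) (\<lambda>x. g x + \<beta> * u x)
        = gdot g g + 2 * \<beta> * gdot g u + \<beta>\<^sup>2 * gdot u u"
    by (simp add: gdot_def algebra_simps power2_eq_square sum.distrib sum_distrib_left)
  then have "gdot (\<lambda>x. g x + \<beta> * u x) (\<lambda>x. g x + \<beta> * u x) = gdot g g + \<beta>\<^sup>2 * gdot u u"
    using assms by simp
  moreover have "0 \<le> gdot u u"
    by (simp add: gdot_def sum_nonneg)
  ultimately show ?thesis
    by (simp add: gnorm_def)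
qed

theorem corollary3:
  fixes f :: "nat \<Rightarrow> ('w::finite \<Rightarrow> real)" and n :: nat
    and M :: "('w \<Rightarrow> real) set" and E h :: "'w \<Rightarrow> real" and I :: "nat set"
  assumes M_def: "M = {p. (\<forall>i\<in>{1..n}. gdot p (f i) \<ge> 0) \<and> gdot p gone = 1}"
    and M_ne: "M \<noteq> {}"
    and M_prob: "\<forall>p\<in>M. \<forall>x. p x \<ge> 0"
    and tight: "\<forall>i\<in>{1..n}. \<exists>p\<in>M. gdot p (f i) = 0"
    and E_in: "E \<in> M"
    and E_min: "gdot E h = lower_exp M h"
    and I_def: "I = {i\<in>{1..n}. gdot E (f i) = 0}"
  shows "\<exists>\<alpha>::nat \<Rightarrow> real. (\<forall>i\<in>I. \<alpha> i \<ge> 0) \<and>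
           (\<exists>\<beta>'::real. h = (\<lambda>x. (\<Sum>i\<in>I. \<alpha> i * centered (f i) x) + \<beta>' * gone x)) \<and>
           (\<forall>\<beta>::real. gnorm (\<lambda>x. \<Sum>i\<in>I. \<alpha> i * centered (f i) x)
                 \<le> gnorm (\<lambda>x. (\<Sum>i\<in>I. \<alpha> i * centered (f i) x) + \<beta> * gone x))"
proof -
  have "\<forall>P\<in>M. gdot P gone = 1"
    by (simp add: M_def)
  with M_prob E_min have "\<forall>P\<in>M. gdot E h \<le> gdot P h"
    using lower_exp_le by metis
  then have "\<exists>\<alpha> \<beta>. (\<forall>i\<in>I. 0 \<le> \<alpha> i) \<and> h = (\<lambda>x. (\<Sum>i\<in>I. \<alpha> i * f i x) + \<beta>)"
    unfolding I_def by (rule minimizer_in_active_cone[OF M_def finite_atLeastAtMost E_in])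
  then obtain \<alpha> \<beta> where \<alpha>: "\<forall>i\<in>I. 0 \<le> \<alpha> i" and h: "h = (\<lambda>x. (\<Sum>i\<in>I. \<alpha> i * f i x) + \<beta>)"
    by blast
  have "gdot (\<lambda>x. \<Sum>i\<in>I. \<alpha> i * centered (f i) x) gone = 0"
    by (simp add: gdot_sum_left gdot_centered_gone)
  then have "gnorm (\<lambda>x. \<Sum>i\<in>I. \<alpha> i * centered (f i) x)
      \<le> gnorm (\<lambda>x. (\<Sum>i\<in>I. \<alpha> i * centered (f i) x) + b * gone x)" for b
    by (rule gnorm_le_add_orthogonal)
  with \<alpha> show ?thesis
    unfolding h nonneg_combination_centered by blast
qed

end
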